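(* Let $r\ge 1$ and let $m_1,\dots,m_r,n$ be positive integers with $m=\sum_{i=1}^r m_i\le n$. Let $$h=\max\Big\{k\in\mathbb{Z},\ k\ge 2:\ \frac{m_i n}{k-1}\ge \Big\lceil \frac{m_i n}{k}\Big\rceil \text{ for all } i\in[r]\Big\}.$$ Then $$\chi_{=}(K_{m_1,\dots,m_r}\times K_n)=\sum_{i=1}^r\Big\lceil \frac{m_i n}{h}\Big\rceil .$$
   Context: All graphs are finite, simple and undirected; $[k]=\{1,\dots,k\}$. A (proper) $k$-coloring of $G$ is a map $f:V(G)\to[k]$ with $f(x)\ne f(y)$ whenever $xy\in E(G)$; its color classes are the sets $f^{-1}(i)$. An equitable $k$-coloring is a $k$-coloring in which any two color classes differ in size by at most $1$ (equivalently each class has size $\lfloor |V(G)|/k\rfloor$ or $\lceil |V(G)|/k\rceil$); $G$ is equitably $k$-colorable if it has one. The equitable chromatic number $\chi_{=}(G)$ is the minimum $k$ such that $G$ is equitably $k$-colorable. $K_{m_1,\dots,m_r}$ denotes the complete multipartite graph with parts of sizes $m_1,\dots,m_r$, and $K_n$ the complete graph on $n$ vertices. The Kronecker product $G\times H$ has vertex set $V(G)\times V(H)$, with $(x,y)$ adjacent to $(x',y')$ iff $xx'\in E(G)$ and $yy'\in E(H)$. *)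

theory Defs
  imports Complex_Main
begin

text \<open>A finite simple graph is represented by a vertex set V and a symmetric,
irreflexive adjacency relation E (only its restriction to V matters).\<close>

definition proper_coloring :: "'a set \<Rightarrow> ('a \<Rightarrow> 'a \<Rightarrow> bool) \<Rightarrow> nat \<Rightarrow> ('a \<Rightarrow> nat) \<Rightarrow> bool" where
  "proper_coloring V E k f \<longleftrightarrow>
     (\<forall>x\<in>V. f x \<in> {1..k}) \<and> (\<forall>x\<in>V. \<forall>y\<in>V. E x y \<longrightarrow> f x \<noteq> f y)"

definition color_class :: "'a set \<Rightarrow> ('a \<Rightarrow> nat) \<Rightarrow> nat \<Rightarrow> 'a set" where
  "color_class V f i = {x\<in>V. f x = i}"

definition equitably_colorable :: "'a set \<Rightarrow> ('a \<Rightarrow> 'a \<Rightarrow> bool) \<Rightarrow> nat \<Rightarrow> bool" where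
  "equitably_colorable V E k \<longleftrightarrow>
     (\<exists>f. proper_coloring V E k f \<and>
        (\<forall>i\<in>{1..k}. \<forall>j\<in>{1..k}. card (color_class V f i) \<le> card (color_class V f j) + 1))"

definition equitable_chromatic_number :: "'a set \<Rightarrow> ('a \<Rightarrow> 'a \<Rightarrow> bool) \<Rightarrow> nat" where
  "equitable_chromatic_number V E = (LEAST k. equitably_colorable V E k)"

text \<open>Complete multipartite graph K_{m_1,...,m_r}, parts indexed 0..r-1 where
ms = [m_1,...,m_r]; vertex (i,j) is the j-th vertex of part i.\<close>

definition cmp_verts :: "nat list \<Rightarrow> (nat \<times> nat) set" where
  "cmp_verts ms = {(i, j). i < length ms \<and> j < ms ! i}"

definition cmp_adj :: "(nat \<times> nat) \<Rightarrow> (nat \<times> nat) \<Rightarrow> bool" where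
  "cmp_adj u v \<longleftrightarrow> fst u \<noteq> fst v"

definition complete_verts :: "nat \<Rightarrow> nat set" where
  "complete_verts n = {0..<n}"

definition complete_adj :: "nat \<Rightarrow> nat \<Rightarrow> bool" where
  "complete_adj x y \<longleftrightarrow> x \<noteq> y"

definition kron_verts :: "'a set \<Rightarrow> 'b set \<Rightarrow> ('a \<times> 'b) set" where
  "kron_verts V W = V \<times> W"

definition kron_adj :: "('a \<Rightarrow> 'a \<Rightarrow> bool) \<Rightarrow> ('b \<Rightarrow> 'b \<Rightarrow> bool) \<Rightarrow> ('a \<times> 'b) \<Rightarrow> ('a \<times> 'b) \<Rightarrow> bool" where
  "kron_adj E F u v \<longleftrightarrow> E (fst u) (fst v) \<and> F (snd u) (snd v)"

end

theory Submission
  imports Defs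
begin

text \<open>
  Write \<open>N\<^sub>i = m\<^sub>i n\<close> for the size of the i-th part
  \<open>P\<^sub>i\<close> of the product.  A number k \<ge> 2 is admissible if every \<open>N\<^sub>i\<close> splits into
  \<open>\<lceil>N\<^sub>i/k\<rceil>\<close> blocks of size k-1 or k, i.e. \<open>(k-1)\<lceil>N\<^sub>i/k\<rceil> \<le> N\<^sub>i\<close>; h is the largest
  admissible number, and h \<ge> n.

  Upper bound: number the vertices of \<open>P\<^sub>i\<close> by \<open>0,\<dots>,N\<^sub>i-1\<close> (vertex (j,a) gets jn+a) and
  colour by the residue modulo \<open>c\<^sub>i = \<lceil>N\<^sub>i/h\<rceil>\<close>.  Two vertices with equal number mod \<open>c\<^sub>i\<close> in the
  same part differ in the \<open>K\<^sub>n\<close> coordinate or coincide, so this is proper, and every class has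
  size h-1 or h.

  Lower bound: in an equitable k-colouring all class sizes lie in [s, s+1].  An independent
  set meeting two parts lies in one \<open>K\<^sub>n\<close>-column, hence has at most m elements; if such a
  class exists then \<open>mn \<le> k(s+1)\<close> with \<open>s \<le> m \<le> n\<close> forces \<open>k \<ge> m \<ge> \<Sum>\<lceil>N\<^sub>i/h\<rceil>\<close>.
  Otherwise every class lies in one part, the \<open>d\<^sub>i\<close> classes inside \<open>P\<^sub>i\<close> show that s+1 is
  admissible (or s = 0), so \<open>s+1 \<le> h\<close>, \<open>N\<^sub>i \<le> d\<^sub>i h\<close> and \<open>\<Sum>\<lceil>N\<^sub>i/h\<rceil> \<le> \<Sum>d\<^sub>i \<le> k\<close>.
\<close>

definition ceil_div :: "nat \<Rightarrow> nat \<Rightarrow> nat" where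
  "ceil_div N t = nat \<lceil>real N / real t\<rceil>"

lemma ceil_div_le_iff:
  assumes "0 < t"
  shows "ceil_div N t \<le> d \<longleftrightarrow> N \<le> d * t"
proof -
  have "ceil_div N t \<le> d \<longleftrightarrow> real N / real t \<le> real d"
    unfolding ceil_div_def by (simp add: nat_le_iff ceiling_le_iff)
  also have "\<dots> \<longleftrightarrow> N \<le> d * t"
    using assms by (simp add: divide_le_eq flip: of_nat_mult)
  finally show ?thesis .
qed

lemma le_ceil_div_mult: "0 < t \<Longrightarrow> N \<le> ceil_div N t * t"
  by (simp add: ceil_div_le_iff [symmetric])

lemma ceil_div_pos: "0 < t \<Longrightarrow> 0 < N \<Longrightarrow> 0 < ceil_div N t"
  using le_ceil_div_mult [of t N] by (cases "ceil_div N t") auto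

text \<open>\<open>fits k N\<close>: N can be cut into \<open>\<lceil>N/k\<rceil>\<close> blocks, each of size k-1 or k.\<close>

definition fits :: "nat \<Rightarrow> nat \<Rightarrow> bool" where
  "fits k N \<longleftrightarrow> (k - 1) * ceil_div N k \<le> N"

lemma fits_real_iff:
  assumes "2 \<le> k"
  shows "real N / (real k - 1) \<ge> real_of_int \<lceil>real N / real k\<rceil> \<longleftrightarrow> fits k N"
proof -
  have ceil: "real_of_int \<lceil>real N / real k\<rceil> = real (ceil_div N k)"
    unfolding ceil_div_def by simp
  have km1: "real k - 1 = real (k - 1)" and "0 < real (k - 1)" using assms by auto
  then have "real N / (real k - 1) \<ge> real (ceil_div N k)
      \<longleftrightarrow> real ((k - 1) * ceil_div N k) \<le> real N"
    unfolding km1 by (simp add: le_divide_eq mult.commute)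
  then show ?thesis unfolding ceil fits_def of_nat_le_iff .
qed

lemma fits_of_blocks:
  assumes "0 < k" and "d * (k - 1) \<le> N" and "N \<le> d * k"
  shows "fits k N"
proof -
  have "ceil_div N k \<le> d" using assms by (simp add: ceil_div_le_iff)
  then have "(k - 1) * ceil_div N k \<le> d * (k - 1)" by (simp add: mult.commute)
  then show ?thesis unfolding fits_def using assms(2) by linarith
qed

lemma fits_bound:
  assumes "0 < N" and "0 < k" and "fits k N"
  shows "k \<le> N + 1"
proof -
  have "1 \<le> ceil_div N k" using ceil_div_pos assms(1,2) by (simp add: Suc_le_eq)
  then have "k - 1 \<le> (k - 1) * ceil_div N k" by simp
  with assms(3) show ?thesis unfolding fits_def by linarith
qed

definition admissible :: "nat list \<Rightarrow> nat \<Rightarrow> nat \<Rightarrow> bool" where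
  "admissible ms n k \<longleftrightarrow> 2 \<le> k \<and> (\<forall>i<length ms. fits k (ms ! i * n))"

text \<open>2 is always admissible, and so is n when n \<ge> 2 (parts \<open>m\<^sub>i n\<close> split into \<open>m\<^sub>i\<close> blocks).\<close>

lemma admissible_two: "admissible ms n 2"
  unfolding admissible_def by (auto intro: fits_of_blocks)

lemma admissible_self:
  assumes "2 \<le> n"
  shows "admissible ms n n"
proof -
  have "fits n (m * n)" for m
    using assms by (intro fits_of_blocks [where d = m]) auto
  then show ?thesis unfolding admissible_def using assms by blast
qed

lemma admissible_bounded:
  assumes "0 < length ms" and "0 < ms ! 0 * n" and "admissible ms n k"
  shows "k \<le> ms ! 0 * n + 1"
  using assms fits_bound unfolding admissible_def by simp

lemma greatest_admissible:
  assumes "0 < length ms" and "0 < ms ! 0 * n"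
    and h: "h = (GREATEST k. admissible ms n k)"
  shows "admissible ms n h" and "\<And>k. admissible ms n k \<Longrightarrow> k \<le> h" and "n \<le> h"
proof -
  show adm: "admissible ms n h"
    unfolding h using admissible_two admissible_bounded [OF assms(1,2)] by (rule GreatestI_nat)
  show max: "k \<le> h" if "admissible ms n k" for k
    unfolding h using that admissible_bounded [OF assms(1,2)] by (rule Greatest_le_nat)
  show "n \<le> h"
  proof (cases "2 \<le> n")
    case True
    then show ?thesis using max admissible_self by blast
  next
    case False
    then show ?thesis using adm unfolding admissible_def by simp
  qed
qed

lemma residue_class_card:
  fixes c r h N :: nat
  assumes "0 < c" and "r < c" and "(h - 1) * c \<le> N" and "N \<le> h * c"
  defines "R \<equiv> {p \<in> {..<N}. p mod c = r}"
  shows "h - 1 \<le> card R" and "card R \<le> h"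
proof -
  define emb where "emb q = q * c + r" for q
  have inj: "inj emb" unfolding emb_def using assms(1) by (intro injI) simp
  have "R \<subseteq> emb ` {..<h}"
  proof
    fix p assume "p \<in> R"
    then have "p < h * c" and "p = emb (p div c)"
      using assms(4) unfolding R_def emb_def by (auto simp: mult.commute)
    moreover have "p div c < h"
      using \<open>p < h * c\<close> assms(1) by (simp add: div_less_iff_less_mult)
    ultimately show "p \<in> emb ` {..<h}" by blast
  qed
  then have "card R \<le> card (emb ` {..<h})" by (intro card_mono) auto
  then show "card R \<le> h" using card_image_le [of "{..<h}" emb] by simp
  have "emb ` {..<h - 1} \<subseteq> R"
  proof
    fix p assume "p \<in> emb ` {..<h - 1}"
    then obtain q where q: "q < h - 1" and p: "p = q * c + r" unfolding emb_def by blast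
    have "q * c + r < (q + 1) * c" using assms(2) by simp
    also have "\<dots> \<le> (h - 1) * c" using q by (intro mult_right_mono) auto
    finally show "p \<in> R" using assms(2,3) p unfolding R_def by simp
  qed
  then have "card (emb ` {..<h - 1}) \<le> card R" unfolding R_def by (intro card_mono) auto
  then show "h - 1 \<le> card R" using inj by (simp add: card_image inj_on_subset)
qed

lemma color_class_independent:
  assumes "proper_coloring V E k f" and "x \<in> color_class V f c" and "y \<in> color_class V f c"
  shows "\<not> E x y"
  using assms unfolding proper_coloring_def color_class_def by force

lemma card_colored_set:
  assumes "finite V" and "finite D"
  shows "card {x \<in> V. f x \<in> D} = (\<Sum>c\<in>D. card (color_class V f c))"
proof -
  have "{x \<in> V. f x \<in> D} = (\<Union>c\<in>D. color_class V f c)"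
    unfolding color_class_def by blast
  also have "card \<dots> = (\<Sum>c\<in>D. card (color_class V f c))"
    using assms by (intro card_UN_disjoint) (auto simp: color_class_def)
  finally show ?thesis .
qed

lemma nearly_equal_band:
  fixes a :: "'b \<Rightarrow> nat"
  assumes "finite A" and "\<forall>i\<in>A. \<forall>j\<in>A. a i \<le> a j + 1"
  obtains s where "\<forall>i\<in>A. s \<le> a i \<and> a i \<le> s + 1"
proof (cases "A = {}")
  case True
  then show ?thesis using that by blast
next
  case False
  define s where "s = Min (a ` A)"
  have "s \<in> a ` A" unfolding s_def using assms(1) False by (intro Min_in) auto
  then obtain i0 where "i0 \<in> A" and "s = a i0" by blast
  then have "\<forall>i\<in>A. a i \<le> s + 1" using assms(2) by simp
  moreover have "\<forall>i\<in>A. s \<le> a i" unfolding s_def using assms(1) by simp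
  ultimately show ?thesis using that by blast
qed

text \<open>The product graph \<open>K\<^sub>m\<^sub>1\<^sub>,\<^sub>\<dots>\<^sub>,\<^sub>m\<^sub>r \<times> K\<^sub>n\<close>: vertices ((i, j), a) with part i, index j in
  the part, and \<open>K\<^sub>n\<close>-coordinate a.\<close>

abbreviation tensor_verts :: "nat list \<Rightarrow> nat \<Rightarrow> ((nat \<times> nat) \<times> nat) set" where
  "tensor_verts ms n \<equiv> kron_verts (cmp_verts ms) (complete_verts n)"

abbreviation tensor_adj :: "(nat \<times> nat) \<times> nat \<Rightarrow> (nat \<times> nat) \<times> nat \<Rightarrow> bool" where
  "tensor_adj \<equiv> kron_adj cmp_adj complete_adj"

lemma mem_tensor_verts [simp]:
  "((i, j), a) \<in> tensor_verts ms n \<longleftrightarrow> i < length ms \<and> j < ms ! i \<and> a < n"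
  unfolding kron_verts_def cmp_verts_def complete_verts_def by simp

lemma tensor_adj_iff: "tensor_adj x y \<longleftrightarrow> fst (fst x) \<noteq> fst (fst y) \<and> snd x \<noteq> snd y"
  unfolding kron_adj_def cmp_adj_def complete_adj_def by simp

lemma cmp_verts_eq: "cmp_verts ms = Sigma {..<length ms} (\<lambda>i. {..<ms ! i})"
  unfolding cmp_verts_def by auto

lemma finite_cmp_verts: "finite (cmp_verts ms)"
  unfolding cmp_verts_eq by simp

lemma card_cmp_verts: "card (cmp_verts ms) = sum_list ms"
  unfolding cmp_verts_eq by (simp add: sum_list_sum_nth atLeast0LessThan)

lemma finite_tensor_verts: "finite (tensor_verts ms n)"
  unfolding kron_verts_def complete_verts_def by (simp add: finite_cmp_verts)

lemma card_tensor_verts: "card (tensor_verts ms n) = sum_list ms * n"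
  unfolding kron_verts_def complete_verts_def by (simp add: card_cartesian_product card_cmp_verts)

definition part :: "nat list \<Rightarrow> nat \<Rightarrow> nat \<Rightarrow> ((nat \<times> nat) \<times> nat) set" where
  "part ms n i = {x \<in> tensor_verts ms n. fst (fst x) = i}"

definition pos :: "nat \<Rightarrow> (nat \<times> nat) \<times> nat \<Rightarrow> nat" where
  "pos n x = snd (fst x) * n + snd x"

lemma bij_pos:
  assumes "i < length ms"
  shows "bij_betw (pos n) (part ms n i) {..<ms ! i * n}"
proof (rule bij_betw_byWitness [where f' = "\<lambda>p. ((i, p div n), p mod n)"])
  show "\<forall>x\<in>part ms n i. ((i, pos n x div n), pos n x mod n) = x"
    unfolding part_def pos_def by auto
  show "\<forall>p\<in>{..<ms ! i * n}. pos n ((i, p div n), p mod n) = p"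
    unfolding pos_def by simp
  show "pos n ` part ms n i \<subseteq> {..<ms ! i * n}"
  proof
    fix p assume "p \<in> pos n ` part ms n i"
    then obtain j a where "j < ms ! i" "a < n" "p = j * n + a"
      unfolding part_def pos_def by auto
    have "(j + 1) * n \<le> ms ! i * n" using \<open>j < ms ! i\<close> by (intro mult_right_mono) auto
    moreover have "p < (j + 1) * n" using \<open>a < n\<close> \<open>p = j * n + a\<close> by simp
    ultimately show "p \<in> {..<ms ! i * n}" by simp
  qed
  show "(\<lambda>p. ((i, p div n), p mod n)) ` {..<ms ! i * n} \<subseteq> part ms n i"
  proof
    fix x assume "x \<in> (\<lambda>p. ((i, p div n), p mod n)) ` {..<ms ! i * n}"
    then obtain p where p: "p < ms ! i * n" and x: "x = ((i, p div n), p mod n)" by blast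
    then have "0 < n" by (cases n) auto
    then show "x \<in> part ms n i" using assms p x by (simp add: part_def div_less_iff_less_mult)
  qed
qed

lemma card_part: "i < length ms \<Longrightarrow> card (part ms n i) = ms ! i * n"
  using bij_betw_same_card [OF bij_pos] by simp

text \<open>An independent set meeting two parts lies in a single \<open>K\<^sub>n\<close>-column, so it has at
  most \<open>m\<^sub>1 + \<dots> + m\<^sub>r\<close> elements.\<close>

lemma independent_set_meeting_two_parts:
  assumes S: "S \<subseteq> tensor_verts ms n" and indep: "\<forall>x\<in>S. \<forall>y\<in>S. \<not> tensor_adj x y"
    and "x \<in> S" and "y \<in> S" and "fst (fst x) \<noteq> fst (fst y)"
  shows "card S \<le> sum_list ms"
proof -
  have same_col: "snd x = snd y" using indep assms(3-5) by (auto simp: tensor_adj_iff)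
  have "S \<subseteq> cmp_verts ms \<times> {snd x}"
  proof
    fix z assume z: "z \<in> S"
    have "snd z = snd x"
    proof (cases "fst (fst z) = fst (fst x)")
      case True
      have "fst (fst z) = fst (fst y) \<or> snd z = snd y"
        using indep z assms(4) by (auto simp: tensor_adj_iff)
      with True assms(5) same_col show ?thesis by simp
    next
      case False
      then show ?thesis using indep z assms(3) by (auto simp: tensor_adj_iff)
    qed
    moreover have "fst z \<in> cmp_verts ms" using z S unfolding kron_verts_def by auto
    ultimately show "z \<in> cmp_verts ms \<times> {snd x}" by (cases z) auto
  qed
  then have "card S \<le> card (cmp_verts ms \<times> {snd x})"
    by (intro card_mono) (auto simp: finite_cmp_verts)
  also have "\<dots> = sum_list ms"
    by (simp add: card_cartesian_product card_cmp_verts)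
  finally show ?thesis .
qed

lemma card_residue_class_in_part:
  assumes "i < length ms" and "0 < k" and "fits k (ms ! i * n)"
    and "r < ceil_div (ms ! i * n) k"
  defines "C \<equiv> {x \<in> part ms n i. pos n x mod ceil_div (ms ! i * n) k = r}"
  shows "k - 1 \<le> card C" and "card C \<le> k"
proof -
  let ?N = "ms ! i * n" and ?c = "ceil_div (ms ! i * n) k"
  have "bij_betw (pos n) C {p \<in> {..<?N}. p mod ?c = r}"
    unfolding C_def using bij_pos [OF assms(1)] by (rule bij_betw_Collect) simp
  then have card_C: "card C = card {p \<in> {..<?N}. p mod ?c = r}"
    by (rule bij_betw_same_card)
  have "(k - 1) * ?c \<le> ?N" using assms(3) unfolding fits_def .
  moreover have "?N \<le> k * ?c" using le_ceil_div_mult [OF assms(2)] by (simp add: mult.commute)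
  ultimately show "k - 1 \<le> card C" and "card C \<le> k"
    unfolding card_C using residue_class_card assms(4) by simp_all
qed

text \<open>Upper bound: for admissible k, colouring \<open>P\<^sub>i\<close> by residues modulo \<open>\<lceil>N\<^sub>i/k\<rceil>\<close> is an
  equitable colouring with \<open>\<Sum>\<lceil>N\<^sub>i/k\<rceil>\<close> colours (all classes of size k-1 or k).\<close>

lemma equitably_colorable_admissible:
  assumes adm: "admissible ms n k"
  shows "equitably_colorable (tensor_verts ms n) tensor_adj
           (\<Sum>i<length ms. ceil_div (ms ! i * n) k)"
proof -
  define V where "V = tensor_verts ms n"
  define K where "K = (\<Sum>i<length ms. ceil_div (ms ! i * n) k)"
  define c where "c i = ceil_div (ms ! i * n) k" for i
  define S where "S = Sigma {..<length ms} (\<lambda>i. {..<c i})"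
  have "card S = K" unfolding S_def K_def c_def by simp
  then obtain g where g: "bij_betw g S {1..K}"
    using finite_same_card_bij [of S "{1..K}"] unfolding S_def by auto
  define f where "f x = g (fst (fst x), pos n x mod c (fst (fst x)))" for x
  have k: "0 < k" and fits: "\<And>i. i < length ms \<Longrightarrow> fits k (ms ! i * n)"
    using adm unfolding admissible_def by auto
  have label_in_S: "(fst (fst x), pos n x mod c (fst (fst x))) \<in> S" if "x \<in> V" for x
  proof -
    let ?i = "fst (fst x)"
    have x: "x \<in> part ms n ?i" and i: "?i < length ms"
      using that unfolding V_def part_def by (auto simp: kron_verts_def cmp_verts_def)
    have "pos n x < ms ! ?i * n" using bij_betw_apply [OF bij_pos [OF i] x] by simp
    then have "0 < ms ! ?i * n" by linarith
    then have "0 < c ?i" unfolding c_def using k by (simp add: ceil_div_pos)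
    then show ?thesis unfolding S_def using i by simp
  qed
  have class_eq: "color_class V f (g (i, r)) = {x \<in> part ms n i. pos n x mod c i = r}"
    if "(i, r) \<in> S" for i r
    using that label_in_S bij_betw_imp_inj_on [OF g]
    unfolding color_class_def part_def V_def f_def inj_on_def by fastforce
  have proper: "proper_coloring V tensor_adj K f"
    unfolding proper_coloring_def
  proof (intro conjI ballI impI)
    show "f x \<in> {1..K}" if "x \<in> V" for x
      unfolding f_def using bij_betwE [OF g] label_in_S [OF that] by blast
    show "f x \<noteq> f y" if "x \<in> V" "y \<in> V" "tensor_adj x y" for x y
      using that label_in_S bij_betw_imp_inj_on [OF g]
      unfolding f_def inj_on_def tensor_adj_iff by fastforce
  qed
  have band: "k - 1 \<le> card (color_class V f col) \<and> card (color_class V f col) \<le> k"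
    if "col \<in> {1..K}" for col
  proof -
    have "col \<in> g ` S" using that bij_betw_imp_surj_on [OF g] by simp
    then obtain i r where ir: "(i, r) \<in> S" and col: "col = g (i, r)" by auto
    then have "i < length ms" and "r < ceil_div (ms ! i * n) k" unfolding S_def c_def by auto
    then show ?thesis
      unfolding col class_eq [OF ir] c_def using card_residue_class_in_part k fits by blast
  qed
  show ?thesis
    unfolding equitably_colorable_def V_def [symmetric] K_def [symmetric]
  proof (intro exI conjI ballI)
    show "proper_coloring V tensor_adj K f" by (rule proper)
    show "card (color_class V f i) \<le> card (color_class V f j) + 1"
      if "i \<in> {1..K}" "j \<in> {1..K}" for i j
      using band [OF that(1)] band [OF that(2)] by linarith
  qed
qed

text \<open>Arithmetic core of the mixed case: \<open>mn \<le> k(s+1)\<close> with \<open>s \<le> m \<le> n\<close> forces \<open>m \<le> k\<close>,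
  since otherwise \<open>k(s+1) \<le> (m-1)(m+1) < m\<^sup>2 \<le> mn\<close>.\<close>

lemma le_of_product_bound:
  fixes m n k s :: nat
  assumes "m * n \<le> k * (s + 1)" and "s \<le> m" and "m \<le> n"
  shows "m \<le> k"
proof (rule ccontr)
  assume "\<not> m \<le> k"
  then have "k * (s + 1) \<le> (m - 1) * (m + 1)" using assms(2) by (intro mult_mono) auto
  also have "\<dots> < m * m" using \<open>\<not> m \<le> k\<close> by (cases m) auto
  also have "\<dots> \<le> m * n" using assms(3) by simp
  finally show False using assms(1) by simp
qed

lemma card_eq_sum_color_classes:
  assumes "finite V" and "proper_coloring V E k f"
  shows "card V = (\<Sum>c\<in>{1..k}. card (color_class V f c))"
proof -
  have "{x \<in> V. f x \<in> {1..k}} = V" using assms(2) unfolding proper_coloring_def by blast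
  then show ?thesis using card_colored_set [OF assms(1), of "{1..k}" f] by simp
qed

lemma lower_bound_mixed_class:
  assumes proper: "proper_coloring (tensor_verts ms n) tensor_adj k f"
    and band: "\<forall>c\<in>{1..k}. s \<le> card (color_class (tensor_verts ms n) f c)
                           \<and> card (color_class (tensor_verts ms n) f c) \<le> s + 1"
    and c: "c \<in> {1..k}" and x: "x \<in> color_class (tensor_verts ms n) f c"
    and y: "y \<in> color_class (tensor_verts ms n) f c" and mixed: "fst (fst x) \<noteq> fst (fst y)"
    and "sum_list ms \<le> n"
  shows "sum_list ms \<le> k"
proof -
  let ?V = "tensor_verts ms n" and ?C = "color_class (tensor_verts ms n) f"
  have "?C c \<subseteq> ?V" by (auto simp: color_class_def)
  moreover have "\<forall>u\<in>?C c. \<forall>v\<in>?C c. \<not> tensor_adj u v"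
    using color_class_independent [OF proper] by blast
  ultimately have "card (?C c) \<le> sum_list ms"
    using independent_set_meeting_two_parts x y mixed by blast
  moreover have "s \<le> card (?C c)" using band c by blast
  ultimately have "s \<le> sum_list ms" by linarith
  have "sum_list ms * n = (\<Sum>c\<in>{1..k}. card (?C c))"
    using card_eq_sum_color_classes [OF finite_tensor_verts proper] card_tensor_verts by simp
  also have "\<dots> \<le> (\<Sum>c\<in>{1..k}. s + 1)" using band by (intro sum_mono) blast
  finally have "sum_list ms * n \<le> k * (s + 1)" by simp
  then show ?thesis
    using \<open>s \<le> sum_list ms\<close> \<open>sum_list ms \<le> n\<close> by (rule le_of_product_bound)
qed

text \<open>Lower bound, pure case: if every class lies inside one part, let \<open>D\<^sub>i\<close> be the colours
  used on \<open>P\<^sub>i\<close>.  The classes split \<open>N\<^sub>i\<close> into \<open>|D\<^sub>i|\<close> blocks of size s or s+1, so s+1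
  is admissible unless s = 0; hence \<open>s+1 \<le> h\<close> and \<open>\<lceil>N\<^sub>i/h\<rceil> \<le> |D\<^sub>i|\<close>.\<close>

lemma lower_bound_pure_classes:
  assumes proper: "proper_coloring (tensor_verts ms n) tensor_adj k f"
    and band: "\<forall>c\<in>{1..k}. s \<le> card (color_class (tensor_verts ms n) f c)
                           \<and> card (color_class (tensor_verts ms n) f c) \<le> s + 1"
    and pure: "\<forall>c\<in>{1..k}. \<forall>x\<in>color_class (tensor_verts ms n) f c.
                 \<forall>y\<in>color_class (tensor_verts ms n) f c. fst (fst x) = fst (fst y)"
    and maximal: "\<And>j. admissible ms n j \<Longrightarrow> j \<le> h" and "0 < h"
  shows "(\<Sum>i<length ms. ceil_div (ms ! i * n) h) \<le> k"
proof -
  let ?V = "tensor_verts ms n" and ?C = "color_class (tensor_verts ms n) f"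
  define D where "D i = {c \<in> {1..k}. \<exists>x\<in>?C c. fst (fst x) = i}" for i
  have colors: "f x \<in> {1..k}" if "x \<in> ?V" for x
    using proper that unfolding proper_coloring_def by blast
  have part_eq: "part ms n i = {x \<in> ?V. f x \<in> D i}" for i
  proof (intro set_eqI iffI)
    fix x assume "x \<in> part ms n i"
    then show "x \<in> {x \<in> ?V. f x \<in> D i}"
      using colors unfolding part_def D_def color_class_def by blast
  next
    fix x assume "x \<in> {x \<in> ?V. f x \<in> D i}"
    then obtain y where "x \<in> ?C (f x)" "y \<in> ?C (f x)" "fst (fst y) = i" "f x \<in> {1..k}"
      unfolding D_def color_class_def by auto
    then show "x \<in> part ms n i" using pure unfolding part_def color_class_def by blast
  qed
  have blocks: "card (D i) * s \<le> ms ! i * n \<and> ms ! i * n \<le> card (D i) * (s + 1)"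
    if "i < length ms" for i
  proof -
    have "ms ! i * n = card (part ms n i)" using card_part [OF that] by simp
    also have "\<dots> = (\<Sum>c\<in>D i. card (?C c))"
      unfolding part_eq by (rule card_colored_set [OF finite_tensor_verts]) (simp add: D_def)
    finally have size: "ms ! i * n = (\<Sum>c\<in>D i. card (?C c))" .
    have "(\<Sum>c\<in>D i. s) \<le> (\<Sum>c\<in>D i. card (?C c))"
      using band by (intro sum_mono) (auto simp: D_def)
    moreover have "(\<Sum>c\<in>D i. card (?C c)) \<le> (\<Sum>c\<in>D i. s + 1)"
      using band by (intro sum_mono) (auto simp: D_def)
    ultimately show ?thesis unfolding size by (simp add: mult.commute)
  qed
  have "s + 1 \<le> h"
  proof (cases "s = 0")
    case False
    have "fits (s + 1) (ms ! i * n)" if "i < length ms" for i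
      using blocks [OF that] by (intro fits_of_blocks [where d = "card (D i)"]) simp_all
    then have "admissible ms n (s + 1)" unfolding admissible_def using False by simp
    then show ?thesis by (rule maximal)
  qed (use \<open>0 < h\<close> in simp)
  then have colors_per_part: "ceil_div (ms ! i * n) h \<le> card (D i)" if "i < length ms" for i
    using blocks [OF that] \<open>0 < h\<close> mult_le_mono2 [of "s + 1" h "card (D i)"]
    by (simp add: ceil_div_le_iff)
  have disjoint: "D i \<inter> D j = {}" if "i \<noteq> j" for i j
    using pure that unfolding D_def by blast
  have "(\<Sum>i<length ms. ceil_div (ms ! i * n) h) \<le> (\<Sum>i<length ms. card (D i))"
    using colors_per_part by (intro sum_mono) simp
  also have "\<dots> = card (\<Union>i<length ms. D i)"
    using disjoint by (intro card_UN_disjoint [symmetric]) (auto simp: D_def)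
  also have "\<dots> \<le> card {1..k}" by (intro card_mono) (auto simp: D_def)
  finally show ?thesis by simp
qed

lemma sum_ceil_div_le_sum_list:
  assumes "0 < h" and "n \<le> h"
  shows "(\<Sum>i<length ms. ceil_div (ms ! i * n) h) \<le> sum_list ms"
proof -
  have "ceil_div (ms ! i * n) h \<le> ms ! i" for i
    using assms by (simp add: ceil_div_le_iff)
  then have "(\<Sum>i<length ms. ceil_div (ms ! i * n) h) \<le> (\<Sum>i<length ms. ms ! i)"
    by (intro sum_mono)
  then show ?thesis by (simp add: sum_list_sum_nth atLeast0LessThan)
qed

lemma lower_bound:
  assumes colorable: "equitably_colorable (tensor_verts ms n) tensor_adj k"
    and "sum_list ms \<le> n" and maximal: "\<And>j. admissible ms n j \<Longrightarrow> j \<le> h"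
    and "0 < h" and "n \<le> h"
  shows "(\<Sum>i<length ms. ceil_div (ms ! i * n) h) \<le> k"
proof -
  obtain f where proper: "proper_coloring (tensor_verts ms n) tensor_adj k f"
    and equitable: "\<forall>i\<in>{1..k}. \<forall>j\<in>{1..k}.
      card (color_class (tensor_verts ms n) f i) \<le> card (color_class (tensor_verts ms n) f j) + 1"
    using colorable unfolding equitably_colorable_def by blast
  let ?C = "color_class (tensor_verts ms n) f"
  obtain s where band: "\<forall>c\<in>{1..k}. s \<le> card (?C c) \<and> card (?C c) \<le> s + 1"
    by (rule nearly_equal_band [OF finite_atLeastAtMost equitable])
  show ?thesis
  proof (cases "\<exists>c\<in>{1..k}. \<exists>x\<in>?C c. \<exists>y\<in>?C c. fst (fst x) \<noteq> fst (fst y)")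
    case True
    then obtain c x y where "c \<in> {1..k}" "x \<in> ?C c" "y \<in> ?C c" "fst (fst x) \<noteq> fst (fst y)"
      by blast
    then have "sum_list ms \<le> k"
      by (rule lower_bound_mixed_class [OF proper band _ _ _ _ \<open>sum_list ms \<le> n\<close>])
    then show ?thesis using sum_ceil_div_le_sum_list [OF \<open>0 < h\<close> \<open>n \<le> h\<close>, of ms] by linarith
  next
    case False
    then have pure: "\<forall>c\<in>{1..k}. \<forall>x\<in>?C c. \<forall>y\<in>?C c. fst (fst x) = fst (fst y)" by blast
    show ?thesis by (rule lower_bound_pure_classes [OF proper band pure maximal \<open>0 < h\<close>])
  qed
qed

theorem theorem3p1:
  fixes ms :: "nat list" and n h :: nat
  assumes "length ms \<ge> 1"
    and "\<forall>i<length ms. ms ! i > 0"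
    and "n > 0"
    and "sum_list ms \<le> n"
    and "h = (GREATEST k. k \<ge> 2 \<and>
               (\<forall>i<length ms. real (ms ! i * n) / (real k - 1) \<ge> real_of_int \<lceil>real (ms ! i * n) / real k\<rceil>))"
  shows "equitable_chromatic_number (kron_verts (cmp_verts ms) (complete_verts n))
                                    (kron_adj cmp_adj complete_adj)
         = (\<Sum>i<length ms. nat \<lceil>real (ms ! i * n) / real h\<rceil>)"
proof -
  have "(\<lambda>k. k \<ge> 2 \<and> (\<forall>i<length ms.
            real (ms ! i * n) / (real k - 1) \<ge> real_of_int \<lceil>real (ms ! i * n) / real k\<rceil>))
        = admissible ms n"
    unfolding admissible_def fun_eq_iff using fits_real_iff by blast
  then have h: "h = (GREATEST k. admissible ms n k)" using assms(5) by simp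
  have "0 < length ms" and "0 < ms ! 0 * n" using assms(1-3) by (auto simp: Suc_le_eq)
  note h_props = greatest_admissible [OF this h]
  have "0 < h" using h_props(1) unfolding admissible_def by simp
  have "equitable_chromatic_number (tensor_verts ms n) tensor_adj
          = (\<Sum>i<length ms. ceil_div (ms ! i * n) h)"
    unfolding equitable_chromatic_number_def
  proof (rule Least_equality)
    show "equitably_colorable (tensor_verts ms n) tensor_adj (\<Sum>i<length ms. ceil_div (ms ! i * n) h)"
      using h_props(1) by (rule equitably_colorable_admissible)
    show "(\<Sum>i<length ms. ceil_div (ms ! i * n) h) \<le> k"
      if "equitably_colorable (tensor_verts ms n) tensor_adj k" for k
      using lower_bound [OF that assms(4) h_props(2) \<open>0 < h\<close> h_props(3)] .
  qed
  then show ?thesis unfolding ceil_div_def .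
qed

end
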